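(* For every integer $t\ge 2$, the set $S_t$ is in general position, i.e., no three of its points are collinear.
   Context: For integers $r\ge 1$ let $\delta_r:=3\cdot 4^{r-1}$ and $\delta_r':=(3r+1)\cdot 4^{r-1}$. For positive integers $k,l$ define $S_{k,l}\subset\mathbb{Z}^2$ recursively: $S_{k,l}:=\{(0,0)\}$ if $k\le 2$ or $l\le 2$; otherwise $S_{k,l}:=S_{k-1,l}\cup\{(x+\delta_{k+l-1},\,y+\delta_{k+l-1}'):(x,y)\in S_{k,l-1}\}$. Let $t\ge 2$ be an integer. For $0\le i\le t-3$ define $v_i:=(3(t-i),-3i)$, and let $w_0:=(0,0)$, $w_{i+1}:=w_i+v_i$ for $i=0,\dots,t-3$. For $i=0,\dots,t-2$ let $q_i:=(t+1)4^{t+1}w_i$. Define $S_t:=\bigcup_{i=0}^{t-2}\{p+q_i: p\in S_{t-i,i+2}\}$. *)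

theory Defs
  imports "HOL-Analysis.Analysis"
begin

definition delta :: "nat \<Rightarrow> int" where
  "delta r = 3 * 4 ^ (r - 1)"

definition delta' :: "nat \<Rightarrow> int" where
  "delta' r = (3 * int r + 1) * 4 ^ (r - 1)"

function Skl :: "nat \<Rightarrow> nat \<Rightarrow> (int \<times> int) set" where
  "Skl k l = (if k \<le> 2 \<or> l \<le> 2 then {(0, 0)}
     else Skl (k - 1) l \<union>
          (\<lambda>(x, y). (x + delta (k + l - 1), y + delta' (k + l - 1))) ` Skl k (l - 1))"
  by auto
termination by (relation "Wellfounded.measure (\<lambda>(k, l). k + l)") auto

definition vvec :: "nat \<Rightarrow> nat \<Rightarrow> int \<times> int" where
  "vvec t i = (3 * (int t - int i), - 3 * int i)"

fun wvec :: "nat \<Rightarrow> nat \<Rightarrow> int \<times> int" where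
  "wvec t 0 = (0, 0)"
| "wvec t (Suc i) = (fst (wvec t i) + fst (vvec t i), snd (wvec t i) + snd (vvec t i))"

definition qvec :: "nat \<Rightarrow> nat \<Rightarrow> int \<times> int" where
  "qvec t i = ((int t + 1) * 4 ^ (t + 1) * fst (wvec t i), (int t + 1) * 4 ^ (t + 1) * snd (wvec t i))"

definition St :: "nat \<Rightarrow> (int \<times> int) set" where
  "St t = (\<Union>i \<in> {0..t - 2}. (\<lambda>(x, y). (x + fst (qvec t i), y + snd (qvec t i))) ` Skl (t - i) (i + 2))"

definition to_real2 :: "int \<times> int \<Rightarrow> real \<times> real" where
  "to_real2 p = (real_of_int (fst p), real_of_int (snd p))"

definition general_position :: "(int \<times> int) set \<Rightarrow> bool" where
  "general_position P \<longleftrightarrow> (\<forall>A \<subseteq> P. card A = 3 \<longrightarrow> \<not> collinear (to_real2 ` A))"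

end

theory Submission
  imports Defs
begin

(* A point of S_{k,l} is a subset sum p(R) = (\<Sum>r\<in>R. \<delta>_r, \<Sum>r\<in>R. \<delta>'_r) over R \<subseteq> {1..k+l-1},
   and \<delta>'_r / \<delta>_r = r + 1/3. As the weights grow by the factor 4, the difference p(Q) - p(P)
   of two distinct subsets has slope strictly between m and m + 1, where m is the largest
   element of the symmetric difference. Of three distinct subsets, two of the three pairs share
   the same largest difference and the third pair has a smaller one, so the two edges at the
   common vertex have slopes in disjoint windows.
   The copies of the S_{k,l} in S_t are translated by q_i = (t+1) 4^(t+1) w_i, where the w_i
   lie on a strictly concave parabola arc. Within one copy all edges have slope > 1, edges
   between copies have slope < 1, and for three copies the curvature of the scaled arc
   dominates the bounded perturbation by the subset sums. *)

definition subset_point :: "nat set \<Rightarrow> int \<times> int" where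
  "subset_point R = ((\<Sum>r\<in>R. delta r), (\<Sum>r\<in>R. delta' r))"

lemma subset_point_empty [simp]: "subset_point {} = (0, 0)"
  by (simp add: subset_point_def)

lemma subset_point_insert:
  "finite R \<Longrightarrow> r \<notin> R \<Longrightarrow> subset_point (insert r R) = subset_point R + (delta r, delta' r)"
  by (simp add: subset_point_def)

(* The defining equation of Skl is unguarded and would loop in the simplifier. *)
declare Skl.simps [simp del]

lemma Skl_subset_subset_points: "Skl k l \<subseteq> subset_point ` Pow {1..k + l - 1}"
proof (induction k l rule: Skl.induct)
  case (1 k l)
  show ?case
  proof (cases "k \<le> 2 \<or> l \<le> 2")
    case True
    then show ?thesis by (subst Skl.simps) force
  next
    case False
    let ?n = "k + l - 1"
    have "Skl (k - 1) l \<subseteq> subset_point ` Pow {1..k - 1 + l - 1}"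
      using "1.IH"(1) False by blast
    also have "\<dots> \<subseteq> subset_point ` Pow {1..?n}"
      by (intro image_mono Pow_mono) auto
    finally have "Skl (k - 1) l \<subseteq> subset_point ` Pow {1..?n}" .
    moreover have "k + (l - 1) - 1 = ?n - 1" using False by simp
    with "1.IH"(2)[OF False] have IH2: "Skl k (l - 1) \<subseteq> subset_point ` Pow {1..?n - 1}"
      by simp
    moreover have "(\<lambda>(x, y). (x + delta ?n, y + delta' ?n)) ` Skl k (l - 1) \<subseteq> subset_point ` Pow {1..?n}"
    proof clarify
      fix x y assume "(x, y) \<in> Skl k (l - 1)"
      then obtain R where R: "R \<subseteq> {1..?n - 1}" "(x, y) = subset_point R"
        using IH2 by blast
      have "?n \<notin> {1..?n - 1}" using False by auto
      then have "?n \<notin> R" "finite R" using R(1) finite_subset[OF R(1)] by auto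
      then have "(x + delta ?n, y + delta' ?n) = subset_point (insert ?n R)"
        by (simp add: subset_point_insert R(2)[symmetric])
      moreover have "R \<subseteq> {1..?n}" using R(1) by (rule order_trans) auto
      then have "insert ?n R \<subseteq> {1..?n}" using False by auto
      ultimately show "(x + delta ?n, y + delta' ?n) \<in> subset_point ` Pow {1..?n}" by blast
    qed
    ultimately show ?thesis using False by (subst Skl.simps) simp
  qed
qed

lemma sum_delta: "(\<Sum>r=1..n. delta r) = 4 ^ n - 1"
  by (induction n) (simp_all add: delta_def)

lemma sum_delta': "(\<Sum>r=1..n. delta' r) = int n * 4 ^ n"
  by (induction n) (simp_all add: delta'_def algebra_simps)

lemma sum_abs_delta'_minus_delta:
  assumes "int n < c"
  shows "(\<Sum>r=1..n. \<bar>delta' r - c * delta r\<bar>) = c * (4 ^ n - 1) - int n * 4 ^ n"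
proof -
  have "\<bar>delta' r - c * delta r\<bar> = c * delta r - delta' r" if "r \<in> {1..n}" for r
  proof -
    have "delta' r - c * delta r = (3 * int r + 1 - 3 * c) * 4 ^ (r - 1)"
      by (simp add: delta_def delta'_def algebra_simps)
    also have "\<dots> < 0"
      using that assms by (intro mult_neg_pos) auto
    finally show ?thesis by simp
  qed
  then have "(\<Sum>r=1..n. \<bar>delta' r - c * delta r\<bar>) = (\<Sum>r=1..n. c * delta r - delta' r)"
    by (rule sum.cong[OF refl])
  also have "\<dots> = c * (4 ^ n - 1) - int n * 4 ^ n"
    unfolding sum_subtractf sum_distrib_left[symmetric] sum_delta sum_delta' ..
  finally show ?thesis .
qed

definition is_top_diff :: "nat set \<Rightarrow> nat set \<Rightarrow> nat \<Rightarrow> bool" where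
  "is_top_diff P Q m \<longleftrightarrow> m \<in> sym_diff P Q \<and> (\<forall>r>m. r \<in> P \<longleftrightarrow> r \<in> Q)"

lemma is_top_diff_sym: "is_top_diff P Q m \<longleftrightarrow> is_top_diff Q P m"
  unfolding is_top_diff_def by blast

lemma is_top_diff_Max:
  assumes "finite P" "finite Q" "P \<noteq> Q"
  shows "is_top_diff P Q (Max (sym_diff P Q))"
proof -
  have D: "finite (sym_diff P Q)" "sym_diff P Q \<noteq> {}" using assms by auto
  have "\<forall>r > Max (sym_diff P Q). r \<in> P \<longleftrightarrow> r \<in> Q"
    using Max_ge[OF D(1)] by (meson DiffI UnI1 UnI2 not_le)
  then show ?thesis unfolding is_top_diff_def using Max_in[OF D] by blast
qed

lemma sum_diff_near_top:
  fixes g :: "nat \<Rightarrow> int"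
  assumes "P \<subseteq> {1..n}" "Q \<subseteq> {1..n}" "is_top_diff P Q m" "m \<in> Q"
  shows "\<bar>sum g Q - sum g P - g m\<bar> \<le> (\<Sum>r=1..<m. \<bar>g r\<bar>)"
proof -
  have fin: "finite P" "finite Q" using assms(1,2) finite_subset by blast+
  let ?A = "Q - P - {m}" and ?B = "P - Q"
  have sub: "?A \<union> ?B \<subseteq> {1..<m}"
  proof
    fix r assume r: "r \<in> ?A \<union> ?B"
    then have "1 \<le> r" using assms(1,2) by auto
    moreover have "r \<le> m" using r assms(3) unfolding is_top_diff_def by (meson DiffE UnE not_le)
    moreover have "r \<noteq> m" using r assms(4) by blast
    ultimately show "r \<in> {1..<m}" by simp
  qed
  have "sum g Q - sum g P = sum g (Q - P) - sum g ?B"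
    using fin by (simp add: sum.Int_Diff[of Q g P] sum.Int_Diff[of P g Q] Int_commute)
  also have "sum g (Q - P) = g m + sum g ?A"
    using fin assms(3,4) unfolding is_top_diff_def by (simp add: sum.remove)
  finally have "\<bar>sum g Q - sum g P - g m\<bar> = \<bar>sum g ?A - sum g ?B\<bar>" by simp
  also have "\<dots> \<le> (\<Sum>r\<in>?A. \<bar>g r\<bar>) + (\<Sum>r\<in>?B. \<bar>g r\<bar>)"
    by (rule order_trans[OF abs_triangle_ineq4 add_mono[OF sum_abs sum_abs]])
  also have "\<dots> = (\<Sum>r\<in>?A \<union> ?B. \<bar>g r\<bar>)"
    using fin by (simp add: sum.union_disjoint Diff_Int_distrib2)
  also have "\<dots> \<le> (\<Sum>r=1..<m. \<bar>g r\<bar>)"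
    using sub by (intro sum_mono2) auto
  finally show ?thesis .
qed

lemma subset_point_diff_slope:
  assumes "P \<subseteq> {1..n}" "Q \<subseteq> {1..n}" "is_top_diff P Q m" "m \<in> Q"
  defines "d \<equiv> subset_point Q - subset_point P"
  shows "int m * fst d < snd d \<and> snd d < (int m + 1) * fst d"
proof -
  obtain k where m: "m = Suc k" using assms(2,4) by (cases m) auto
  (* For c = m and c = m + 1 the weight \<delta>'_m - c \<delta>_m outweighs all weights below m. *)
  have near: "\<bar>snd d - c * fst d - (delta' m - c * delta m)\<bar> \<le> c * (4 ^ k - 1) - int k * 4 ^ k"
    if "int k < c" for c
  proof -
    have "snd d - c * fst d = (\<Sum>r\<in>Q. delta' r - c * delta r) - (\<Sum>r\<in>P. delta' r - c * delta r)"
      by (simp add: d_def subset_point_def sum_subtractf right_diff_distrib flip: sum_distrib_left)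
    then show ?thesis
      using sum_diff_near_top[OF assms(1-4), of "\<lambda>r. delta' r - c * delta r"]
        sum_abs_delta'_minus_delta[OF that]
      by (simp add: m atLeastLessThanSuc_atLeastAtMost)
  qed
  have "delta' m - int m * delta m = 4 ^ k"
    by (simp add: m delta_def delta'_def algebra_simps)
  with near[of "int m"] have "\<bar>snd d - int m * fst d - 4 ^ k\<bar> \<le> 4 ^ k - int m"
    by (simp add: m algebra_simps)
  moreover have "delta' m - (int m + 1) * delta m = - 2 * 4 ^ k"
    by (simp add: m delta_def delta'_def algebra_simps)
  with near[of "int m + 1"]
  have "\<bar>snd d - (int m + 1) * fst d + 2 * 4 ^ k\<bar> \<le> 2 * 4 ^ k - int m - 1"
    by (simp add: m algebra_simps)
  moreover have "int m \<ge> 1" using m by simp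
  ultimately show ?thesis unfolding abs_le_iff by linarith
qed

lemma subset_point_diff_slope_oriented:
  assumes "P \<subseteq> {1..n}" "Q \<subseteq> {1..n}" "is_top_diff P Q m"
  obtains d where "d \<in> {subset_point Q - subset_point P, - (subset_point Q - subset_point P)}"
    "0 < fst d" "int m * fst d < snd d" "snd d < (int m + 1) * fst d"
proof (cases "m \<in> Q")
  case True
  with subset_point_diff_slope[OF assms] show ?thesis
    by (intro that[of "subset_point Q - subset_point P"]) (auto simp: algebra_simps)
next
  case False
  with assms(3) have "m \<in> P" unfolding is_top_diff_def by blast
  with subset_point_diff_slope[OF assms(2,1) iffD1[OF is_top_diff_sym assms(3)]] show ?thesis
    by (intro that[of "subset_point P - subset_point Q"]) (auto simp: algebra_simps)
qed

definition cross :: "int \<times> int \<Rightarrow> int \<times> int \<Rightarrow> int" where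
  "cross u v = fst u * snd v - snd u * fst v"

definition det3 :: "int \<times> int \<Rightarrow> int \<times> int \<Rightarrow> int \<times> int \<Rightarrow> int" where
  "det3 a b c = cross (b - a) (c - a)"

lemma cross_minus_left [simp]: "cross (- u) v = - cross u v"
  and cross_minus_right [simp]: "cross u (- v) = - cross u v"
  by (simp_all add: cross_def)

lemma cross_swap: "cross v u = - cross u v"
  by (simp add: cross_def)

lemma det3_rotate: "det3 a b c = det3 b c a"
  and det3_swap: "det3 a b c = - det3 b a c"
  by (simp_all add: det3_def cross_def algebra_simps)

lemma det3_eq_cross_steps: "det3 a b c = cross (b - a) (c - b)"
  by (simp add: det3_def cross_def algebra_simps)

lemma cross_ne_0_if_signed:
  assumes "u' \<in> {u, - u}" "v' \<in> {v, - v}" "cross u' v' \<noteq> 0"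
  shows "cross u v \<noteq> 0"
  using assms by auto

lemma cross_pos_if_slopes_separated:
  fixes c :: int
  assumes "0 < fst u" "0 < fst v" "snd u < c * fst u" "c * fst v < snd v"
  shows "0 < cross u v"
proof -
  have "snd u * fst v < (c * fst u) * fst v" using assms by simp
  also have "\<dots> = fst u * (c * fst v)" by simp
  also have "\<dots> < fst u * snd v" using assms by simp
  finally show ?thesis by (simp add: cross_def)
qed

lemma cross_perturbation:
  fixes C :: int
  assumes "\<bar>fst e1\<bar> \<le> C" "\<bar>snd e1\<bar> \<le> C" "\<bar>fst e2\<bar> \<le> C" "\<bar>snd e2\<bar> \<le> C"
  shows "\<bar>cross (u + e1) (v + e2) - cross u v\<bar>
    \<le> C * (\<bar>fst u\<bar> + \<bar>snd u\<bar>) + C * (\<bar>fst v\<bar> + \<bar>snd v\<bar>) + 2 * (C * C)"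
proof -
  have C: "0 \<le> C" using assms(1) by linarith
  have "cross (u + e1) (v + e2) - cross u v
      = fst u * snd e2 - snd u * fst e2 + (fst e1 * snd v - snd e1 * fst v)
        + (fst e1 * snd e2 - snd e1 * fst e2)"
    by (simp add: cross_def algebra_simps)
  also have "\<bar>\<dots>\<bar> \<le> (\<bar>fst u\<bar> * C + \<bar>snd u\<bar> * C) + (C * \<bar>snd v\<bar> + C * \<bar>fst v\<bar>) + (C * C + C * C)"
    using assms C
    by (intro order_trans[OF abs_triangle_ineq] order_trans[OF abs_triangle_ineq4] add_mono)
      (auto simp: abs_mult intro: mult_mono mult_left_mono mult_right_mono)
  finally show ?thesis by (simp add: algebra_simps)
qed

lemma det3_subset_points_ne_0_if_top_diff_less:
  assumes "P \<subseteq> {1..n}" "Q \<subseteq> {1..n}" "R \<subseteq> {1..n}"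
    and "is_top_diff P Q m1" "is_top_diff P R m2" "m1 < m2"
  shows "det3 (subset_point P) (subset_point Q) (subset_point R) \<noteq> 0"
proof -
  obtain d1 where d1: "d1 \<in> {subset_point Q - subset_point P, - (subset_point Q - subset_point P)}"
    "0 < fst d1" "snd d1 < (int m1 + 1) * fst d1"
    using subset_point_diff_slope_oriented[OF assms(1,2,4)] by blast
  obtain d2 where d2: "d2 \<in> {subset_point R - subset_point P, - (subset_point R - subset_point P)}"
    "0 < fst d2" "int m2 * fst d2 < snd d2"
    using subset_point_diff_slope_oriented[OF assms(1,3,5)] by blast
  have "(int m1 + 1) * fst d2 \<le> int m2 * fst d2"
    using assms(6) d2(2) by (intro mult_right_mono) auto
  with d2(3) have "(int m1 + 1) * fst d2 < snd d2" by linarith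
  then have "0 < cross d1 d2" by (rule cross_pos_if_slopes_separated[OF d1(2) d2(2) d1(3)])
  then show ?thesis using cross_ne_0_if_signed[OF d1(1) d2(1)] by (simp add: det3_def)
qed

lemma det3_subset_points_ne_0_if_agree_above:
  assumes "P \<subseteq> {1..n}" "Q \<subseteq> {1..n}" "R \<subseteq> {1..n}" "P \<noteq> Q"
    and "\<forall>r\<ge>M. r \<in> P \<longleftrightarrow> r \<in> Q" "is_top_diff P R M"
  shows "det3 (subset_point P) (subset_point Q) (subset_point R) \<noteq> 0"
proof -
  have "finite P" "finite Q" using assms(1,2) finite_subset by blast+
  then have top: "is_top_diff P Q (Max (sym_diff P Q))"
    using assms(4) by (rule is_top_diff_Max)
  then have "Max (sym_diff P Q) < M"
    using assms(5) unfolding is_top_diff_def by (meson DiffE UnE not_le)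
  then show ?thesis
    using det3_subset_points_ne_0_if_top_diff_less[OF assms(1-3) top assms(6)] by blast
qed

lemma det3_subset_points_ne_0:
  assumes "P \<subseteq> {1..n}" "Q \<subseteq> {1..n}" "R \<subseteq> {1..n}" "P \<noteq> Q" "Q \<noteq> R" "P \<noteq> R"
  shows "det3 (subset_point P) (subset_point Q) (subset_point R) \<noteq> 0"
proof -
  let ?D = "sym_diff P Q \<union> sym_diff Q R \<union> sym_diff P R"
  let ?M = "Max ?D"
  have "finite P" "finite Q" "finite R" using assms(1-3) finite_subset by blast+
  then have fin: "finite ?D" by simp
  have M: "?M \<in> ?D" using fin by (rule Max_in) (use assms(4) in blast)
  have above: "r \<notin> ?D" if "?M < r" for r
    using that Max_ge[OF fin, of r] by linarith
  have agree: "\<forall>r\<ge>?M. r \<in> X \<longleftrightarrow> r \<in> Y" if "?M \<in> X \<longleftrightarrow> ?M \<in> Y" "X \<in> {P, Q, R}" "Y \<in> {P, Q, R}"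
    for X Y
  proof (intro allI impI)
    fix r assume "?M \<le> r"
    then consider "r = ?M" | "?M < r" by linarith
    then show "r \<in> X \<longleftrightarrow> r \<in> Y"
      by cases (use that above in blast)+
  qed
  consider "?M \<in> P \<longleftrightarrow> ?M \<in> Q" | "?M \<in> P \<longleftrightarrow> ?M \<in> R" | "?M \<in> Q \<longleftrightarrow> ?M \<in> R"
    by blast
  then show ?thesis
  proof cases
    case 1
    then have "is_top_diff P R ?M"
      using M above unfolding is_top_diff_def by blast
    then show ?thesis
      using det3_subset_points_ne_0_if_agree_above[OF assms(1-4) agree[OF 1]] by blast
  next
    case 2
    then have "is_top_diff P Q ?M"
      using M above unfolding is_top_diff_def by blast
    then have "det3 (subset_point P) (subset_point R) (subset_point Q) \<noteq> 0"
      using det3_subset_points_ne_0_if_agree_above[OF assms(1,3,2,6) agree[OF 2]] by blast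
    then show ?thesis by (metis det3_rotate det3_swap neg_equal_0_iff_equal)
  next
    case 3
    then have "is_top_diff Q P ?M"
      using M above unfolding is_top_diff_def by blast
    then have "det3 (subset_point Q) (subset_point R) (subset_point P) \<noteq> 0"
      using det3_subset_points_ne_0_if_agree_above[OF assms(2,3,1,5) agree[OF 3]] by blast
    then show ?thesis by (metis det3_rotate)
  qed
qed

definition block_scale :: "nat \<Rightarrow> int" where
  "block_scale t = (int t + 1) * 4 ^ (t + 1)"

lemma block_scale_pos: "0 < block_scale t"
  by (simp add: block_scale_def)

definition block_point :: "nat \<Rightarrow> nat \<Rightarrow> nat set \<Rightarrow> int \<times> int" where
  "block_point t i R = qvec t i + subset_point R"

lemma St_subset_block_points:
  "St t \<subseteq> case_prod (block_point t) ` ({..t - 2} \<times> Pow {1..t + 1})"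
proof
  fix p assume "p \<in> St t"
  then obtain i x y where i: "i \<le> t - 2" and xy: "(x, y) \<in> Skl (t - i) (i + 2)"
    and p: "p = (x + fst (qvec t i), y + snd (qvec t i))"
    unfolding St_def by auto
  have "t - i + (i + 2) - 1 = t + 1" using i by simp
  then obtain R where "R \<subseteq> {1..t + 1}" "(x, y) = subset_point R"
    using Skl_subset_subset_points[of "t - i" "i + 2"] xy by auto
  moreover have "p = block_point t i R"
    using p calculation(2) by (simp add: block_point_def prod_eq_iff)
  ultimately show "p \<in> case_prod (block_point t) ` ({..t - 2} \<times> Pow {1..t + 1})"
    using i by auto
qed

lemma subset_point_bounds:
  assumes "R \<subseteq> {1..n}"
  shows "0 \<le> fst (subset_point R)" "fst (subset_point R) \<le> 4 ^ n - 1"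
    and "0 \<le> snd (subset_point R)" "snd (subset_point R) \<le> int n * 4 ^ n"
proof -
  have nonneg: "\<And>r. 0 \<le> delta r" "\<And>r. 0 \<le> delta' r" by (simp_all add: delta_def delta'_def)
  then show "0 \<le> fst (subset_point R)" "0 \<le> snd (subset_point R)"
    by (simp_all add: subset_point_def sum_nonneg)
  have "fst (subset_point R) \<le> (\<Sum>r=1..n. delta r)"
    using assms nonneg unfolding subset_point_def by (auto intro: sum_mono2)
  then show "fst (subset_point R) \<le> 4 ^ n - 1" unfolding sum_delta .
  have "snd (subset_point R) \<le> (\<Sum>r=1..n. delta' r)"
    using assms nonneg unfolding subset_point_def by (auto intro: sum_mono2)
  then show "snd (subset_point R) \<le> int n * 4 ^ n" unfolding sum_delta' .
qed

lemma subset_point_diff_le_block_scale: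
  assumes "P \<subseteq> {1..t + 1}" "Q \<subseteq> {1..t + 1}"
  shows "\<bar>fst (subset_point Q - subset_point P)\<bar> \<le> block_scale t"
    and "\<bar>snd (subset_point Q - subset_point P)\<bar> \<le> block_scale t"
proof -
  have "(4::int) ^ (t + 1) \<le> block_scale t" "int (t + 1) * 4 ^ (t + 1) = block_scale t"
    by (simp_all add: block_scale_def)
  then show "\<bar>fst (subset_point Q - subset_point P)\<bar> \<le> block_scale t"
    and "\<bar>snd (subset_point Q - subset_point P)\<bar> \<le> block_scale t"
    using subset_point_bounds[OF assms(1)] subset_point_bounds[OF assms(2)]
    unfolding fst_diff snd_diff abs_le_iff by linarith+
qed

lemma wvec_closed_form:
  "2 * fst (wvec t i) = 3 * int i * (2 * int t - int i + 1)"
  "2 * snd (wvec t i) = - 3 * int i * (int i - 1)"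
  by (induction i) (simp_all add: vvec_def algebra_simps)

lemma qvec_diff_closed_form:
  "2 * fst (qvec t j - qvec t i) = 3 * block_scale t * (int j - int i) * (2 * int t - int i - int j + 1)"
  "2 * snd (qvec t j - qvec t i) = - 3 * block_scale t * (int j - int i) * (int i + int j - 1)"
proof -
  have "2 * fst (qvec t j - qvec t i) = block_scale t * (2 * fst (wvec t j) - 2 * fst (wvec t i))"
    "2 * snd (qvec t j - qvec t i) = block_scale t * (2 * snd (wvec t j) - 2 * snd (wvec t i))"
    by (simp_all add: qvec_def block_scale_def algebra_simps)
  then show "2 * fst (qvec t j - qvec t i) = 3 * block_scale t * (int j - int i) * (2 * int t - int i - int j + 1)"
    "2 * snd (qvec t j - qvec t i) = - 3 * block_scale t * (int j - int i) * (int i + int j - 1)"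
    unfolding wvec_closed_form by (simp_all add: algebra_simps)
qed

lemma qvec_diff_bounds:
  assumes "i < j" "j \<le> t - 2"
  shows "9 * block_scale t \<le> fst (qvec t j - qvec t i)" "snd (qvec t j - qvec t i) \<le> 0"
proof -
  note C = block_scale_pos[of t]
  have "1 * 6 \<le> (int j - int i) * (2 * int t - int i - int j + 1)"
    using assms by (intro mult_mono) auto
  then have "3 * block_scale t * 6 \<le> 3 * block_scale t * ((int j - int i) * (2 * int t - int i - int j + 1))"
    using C by (intro mult_left_mono) auto
  then show "9 * block_scale t \<le> fst (qvec t j - qvec t i)"
    using qvec_diff_closed_form(1)[of t j i] by (simp add: mult.assoc)
  have "0 \<le> 3 * block_scale t * ((int j - int i) * (int i + int j - 1))"
    using assms C by simp
  then show "snd (qvec t j - qvec t i) \<le> 0"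
    using qvec_diff_closed_form(2)[of t j i] by (simp add: mult.assoc)
qed

lemma qvec_diff_norm:
  assumes "i < j" "j \<le> t - 2"
  shows "\<bar>fst (qvec t j - qvec t i)\<bar> + \<bar>snd (qvec t j - qvec t i)\<bar>
    = 3 * block_scale t * int t * (int j - int i)"
proof -
  have "2 * fst (qvec t j - qvec t i) - 2 * snd (qvec t j - qvec t i)
      = 2 * (3 * block_scale t * int t * (int j - int i))"
    unfolding qvec_diff_closed_form by (simp add: algebra_simps)
  moreover have "0 \<le> fst (qvec t j - qvec t i)"
    using qvec_diff_bounds(1)[OF assms] block_scale_pos[of t] by linarith
  ultimately show ?thesis
    using qvec_diff_bounds(2)[OF assms] by simp
qed

lemma qvec_diff_cross:
  "4 * cross (qvec t j - qvec t i) (qvec t k - qvec t j)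
    = - 18 * block_scale t ^ 2 * int t * (int j - int i) * (int k - int j) * (int k - int i)"
proof -
  have "4 * cross (qvec t j - qvec t i) (qvec t k - qvec t j)
      = (2 * fst (qvec t j - qvec t i)) * (2 * snd (qvec t k - qvec t j))
        - (2 * snd (qvec t j - qvec t i)) * (2 * fst (qvec t k - qvec t j))"
    by (simp add: cross_def algebra_simps)
  then show ?thesis
    unfolding qvec_diff_closed_form by (simp add: power2_eq_square algebra_simps)
qed

lemma qvec_diff_perturbed_slope:
  assumes "i < j" "j \<le> t - 2" "\<bar>fst e\<bar> \<le> block_scale t" "\<bar>snd e\<bar> \<le> block_scale t"
  shows "0 < fst (qvec t j - qvec t i + e)" "snd (qvec t j - qvec t i + e) < 1 * fst (qvec t j - qvec t i + e)"
  using qvec_diff_bounds[OF assms(1,2)] block_scale_pos[of t] assms(3,4)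
  unfolding fst_add snd_add abs_le_iff mult_1 by linarith+

lemma det3_block_points_two_blocks:
  assumes "i \<noteq> j" "i \<le> t - 2" "j \<le> t - 2" "P \<noteq> Q"
    and "P \<subseteq> {1..t + 1}" "Q \<subseteq> {1..t + 1}" "R \<subseteq> {1..t + 1}"
  shows "det3 (block_point t i P) (block_point t i Q) (block_point t j R) \<noteq> 0"
proof -
  let ?u = "subset_point Q - subset_point P"
  let ?v = "qvec t j - qvec t i + (subset_point R - subset_point P)"
  have "finite P" "finite Q" using assms(5,6) finite_subset by blast+
  then have top: "is_top_diff P Q (Max (sym_diff P Q))"
    using assms(4) by (rule is_top_diff_Max)
  then have m: "1 \<le> int (Max (sym_diff P Q))"
    using assms(5,6) unfolding is_top_diff_def by auto
  obtain d where d: "d \<in> {?u, - ?u}" "0 < fst d" "int (Max (sym_diff P Q)) * fst d < snd d"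
    using subset_point_diff_slope_oriented[OF assms(5,6) top] by blast
  have "1 * fst d \<le> int (Max (sym_diff P Q)) * fst d"
    using m d(2) by (intro mult_right_mono) auto
  with d(3) have d3: "1 * fst d < snd d" by linarith
  obtain w where w: "w \<in> {?v, - ?v}" "0 < fst w" "snd w < 1 * fst w"
  proof (cases "i < j")
    case True
    show ?thesis
      by (rule that[of ?v]) (use qvec_diff_perturbed_slope[OF True assms(3)]
          subset_point_diff_le_block_scale[OF assms(5,7)] in auto)
  next
    case False
    with assms(1) have "j < i" by simp
    have "- ?v = qvec t i - qvec t j + (subset_point P - subset_point R)"
      by (simp add: algebra_simps)
    then show ?thesis
      by (intro that[of "- ?v"]) (use qvec_diff_perturbed_slope[OF \<open>j < i\<close> assms(2)]
          subset_point_diff_le_block_scale[OF assms(7,5)] in auto)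
  qed
  have "0 < cross w d" by (rule cross_pos_if_slopes_separated[OF w(2) d(2) w(3) d3])
  then have "cross ?v ?u \<noteq> 0" using cross_ne_0_if_signed[OF w(1) d(1)] by simp
  moreover have "det3 (block_point t i P) (block_point t i Q) (block_point t j R) = cross ?u ?v"
    by (simp add: det3_def block_point_def algebra_simps)
  ultimately show ?thesis using cross_swap[of ?u ?v] by simp
qed

lemma convexity_margin:
  fixes a b T :: int
  assumes "1 \<le> a" "1 \<le> b" "2 \<le> T"
  shows "4 * (3 * T * (a + b) + 2) < 18 * T * a * b * (a + b)"
proof -
  have "2 * 2 \<le> T * (a + b)" using assms by (intro mult_mono) auto
  moreover have "1 \<le> a * b" using assms by (metis mult_mono mult_1 order_trans zero_le_one)
  ultimately have "T * (a + b) * 1 \<le> T * (a + b) * (a * b)" by (intro mult_left_mono) auto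
  with \<open>2 * 2 \<le> T * (a + b)\<close> show ?thesis by (simp add: algebra_simps)
qed

lemma det3_block_points_three_blocks:
  assumes "i < j" "j < k" "k \<le> t - 2"
    and "P \<subseteq> {1..t + 1}" "Q \<subseteq> {1..t + 1}" "R \<subseteq> {1..t + 1}"
  shows "det3 (block_point t i P) (block_point t j Q) (block_point t k R) \<noteq> 0"
proof -
  define C where "C = block_scale t"
  define a where "a = int j - int i"
  define b where "b = int k - int j"
  let ?D1 = "qvec t j - qvec t i" and ?D2 = "qvec t k - qvec t j"
  let ?e1 = "subset_point Q - subset_point P" and ?e2 = "subset_point R - subset_point Q"
  have det: "det3 (block_point t i P) (block_point t j Q) (block_point t k R) = cross (?D1 + ?e1) (?D2 + ?e2)"
    by (simp add: det3_eq_cross_steps block_point_def algebra_simps)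
  have e1: "\<bar>fst ?e1\<bar> \<le> C" "\<bar>snd ?e1\<bar> \<le> C"
    using subset_point_diff_le_block_scale[OF assms(4,5)] by (simp_all add: C_def)
  have e2: "\<bar>fst ?e2\<bar> \<le> C" "\<bar>snd ?e2\<bar> \<le> C"
    using subset_point_diff_le_block_scale[OF assms(5,6)] by (simp_all add: C_def)
  have "\<bar>fst ?D1\<bar> + \<bar>snd ?D1\<bar> = 3 * C * int t * a" "\<bar>fst ?D2\<bar> + \<bar>snd ?D2\<bar> = 3 * C * int t * b"
    using qvec_diff_norm[of i j t] qvec_diff_norm[of j k t] assms by (simp_all add: C_def a_def b_def)
  with cross_perturbation[OF e1 e2, of ?D1 ?D2]
  have err: "\<bar>cross (?D1 + ?e1) (?D2 + ?e2) - cross ?D1 ?D2\<bar>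
      \<le> C * (3 * C * int t * a) + C * (3 * C * int t * b) + 2 * (C * C)"
    by simp
  have main: "4 * cross ?D1 ?D2 = - (C * C) * (18 * int t * a * b * (a + b))"
    unfolding qvec_diff_cross C_def a_def b_def by (simp add: power2_eq_square algebra_simps)
  have "1 \<le> a" "1 \<le> b" "2 \<le> int t" using assms by (simp_all add: a_def b_def)
  then have "4 * (3 * int t * (a + b) + 2) < 18 * int t * a * b * (a + b)"
    by (rule convexity_margin)
  then have "(C * C) * (4 * (3 * int t * (a + b) + 2)) < (C * C) * (18 * int t * a * b * (a + b))"
    using block_scale_pos[of t] unfolding C_def by (intro mult_strict_left_mono) auto
  then have "4 * \<bar>cross (?D1 + ?e1) (?D2 + ?e2) - cross ?D1 ?D2\<bar> < \<bar>4 * cross ?D1 ?D2\<bar>"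
    using err unfolding main by (simp add: algebra_simps abs_mult)
  then show ?thesis unfolding det by auto
qed

lemma det3_sorted_block_points:
  assumes "i1 \<le> i2" "i2 \<le> i3" "i3 \<le> t - 2"
    and "R1 \<subseteq> {1..t + 1}" "R2 \<subseteq> {1..t + 1}" "R3 \<subseteq> {1..t + 1}"
    and "block_point t i1 R1 \<noteq> block_point t i2 R2" "block_point t i2 R2 \<noteq> block_point t i3 R3"
      "block_point t i1 R1 \<noteq> block_point t i3 R3"
  shows "det3 (block_point t i1 R1) (block_point t i2 R2) (block_point t i3 R3) \<noteq> 0"
proof -
  consider "i1 = i2" "i2 = i3" | "i1 = i2" "i2 < i3" | "i1 < i2" "i2 = i3" | "i1 < i2" "i2 < i3"
    using assms(1,2) by linarith
  then show ?thesis
  proof cases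
    case 1
    then have "R1 \<noteq> R2" "R2 \<noteq> R3" "R1 \<noteq> R3" using assms(7-9) by auto
    with 1 show ?thesis
      using det3_subset_points_ne_0[OF assms(4-6)] by (simp add: block_point_def det3_def)
  next
    case 2
    then have "R1 \<noteq> R2" using assms(7) by auto
    with 2 show ?thesis
      using det3_block_points_two_blocks[of i2 i3 t R1 R2 R3] assms(3-6) by simp
  next
    case 3
    then have "R2 \<noteq> R3" using assms(8) by auto
    with 3 have "det3 (block_point t i2 R2) (block_point t i2 R3) (block_point t i1 R1) \<noteq> 0"
      using det3_block_points_two_blocks[of i2 i1 t R2 R3 R1] assms(3-6) by simp
    then show ?thesis using 3 det3_rotate by metis
  next
    case 4
    then show ?thesis using det3_block_points_three_blocks assms(3-6) by simp
  qed
qed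

lemma card_3_sorted_preimages:
  fixes key :: "'a \<Rightarrow> 'b::linorder"
  assumes "A \<subseteq> f ` D" "card A = 3"
  obtains x y z where "x \<in> D" "y \<in> D" "z \<in> D" "key x \<le> key y" "key y \<le> key z"
    "f x \<noteq> f y" "f y \<noteq> f z" "f x \<noteq> f z" "A = {f x, f y, f z}"
proof -
  obtain a b c where abc: "A = {a, b, c}" "a \<noteq> b" "b \<noteq> c" "a \<noteq> c"
    using assms(2) by (auto simp: card_3_iff)
  then obtain x y z where xyz: "x \<in> D" "y \<in> D" "z \<in> D" "a = f x" "b = f y" "c = f z"
    using assms(1) by (metis image_iff insert_subset)
  note facts = xyz abc
  show ?thesis
  proof (rule le_cases3[of "key x" "key y" "key z"])
    show "key x \<le> key y \<Longrightarrow> key y \<le> key z \<Longrightarrow> thesis" by (rule that[of x y z]) (use facts in auto)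
    show "key y \<le> key x \<Longrightarrow> key x \<le> key z \<Longrightarrow> thesis" by (rule that[of y x z]) (use facts in auto)
    show "key x \<le> key z \<Longrightarrow> key z \<le> key y \<Longrightarrow> thesis" by (rule that[of x z y]) (use facts in auto)
    show "key z \<le> key y \<Longrightarrow> key y \<le> key x \<Longrightarrow> thesis" by (rule that[of z y x]) (use facts in auto)
    show "key y \<le> key z \<Longrightarrow> key z \<le> key x \<Longrightarrow> thesis" by (rule that[of y z x]) (use facts in auto)
    show "key z \<le> key x \<Longrightarrow> key x \<le> key y \<Longrightarrow> thesis" by (rule that[of z x y]) (use facts in auto)
  qed
qed

lemma collinear_imp_det3_eq_0:
  assumes "collinear {to_real2 a, to_real2 b, to_real2 c}"
  shows "det3 a b c = 0"
proof -
  obtain u where u: "\<forall>p\<in>{to_real2 a, to_real2 b, to_real2 c}. \<forall>q\<in>{to_real2 a, to_real2 b, to_real2 c}.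
      \<exists>s. p - q = s *\<^sub>R u"
    using assms unfolding collinear_def by blast
  then obtain s1 s2 where "to_real2 b - to_real2 a = s1 *\<^sub>R u" "to_real2 c - to_real2 a = s2 *\<^sub>R u"
    by blast
  then have "real_of_int (det3 a b c) = s1 * fst u * (s2 * snd u) - s1 * snd u * (s2 * fst u)"
    by (simp add: det3_def cross_def to_real2_def prod_eq_iff)
  then show ?thesis by (simp add: algebra_simps)
qed

theorem proposition4:
  fixes t :: nat
  assumes "t \<ge> 2"
  shows "general_position (St t)"
  unfolding general_position_def
proof (intro allI impI notI)
  fix A assume A: "A \<subseteq> St t" "card A = 3" and col: "collinear (to_real2 ` A)"
  let ?I = "{..t - 2} \<times> Pow {1..t + 1}"
  define p where "p = case_prod (block_point t)"
  have "A \<subseteq> p ` ?I" using A(1) St_subset_block_points unfolding p_def by blast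
  then obtain x y z where xyz: "x \<in> ?I" "y \<in> ?I" "z \<in> ?I" "fst x \<le> fst y" "fst y \<le> fst z"
      "p x \<noteq> p y" "p y \<noteq> p z" "p x \<noteq> p z" "A = {p x, p y, p z}"
    using A(2) by (rule card_3_sorted_preimages)
  have "det3 (p x) (p y) (p z) \<noteq> 0"
    using det3_sorted_block_points[of "fst x" "fst y" "fst z" t "snd x" "snd y" "snd z"] xyz
    by (simp add: p_def split_beta mem_Times_iff)
  moreover have "collinear {to_real2 (p x), to_real2 (p y), to_real2 (p z)}"
    using col xyz(9) by simp
  ultimately show False using collinear_imp_det3_eq_0 by blast
qed

end
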